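(* Let $\mu(t)$ and $\omega^{2}(t)$ be given functions of time. If $r(t)$ is a solution of the initial value problem for the linear ODE $$\ddot{r}+\frac{\dot{\mu}(t)}{\mu(t)}\dot{r}+\omega^{2}(t)r=0,\qquad r(t_{0})=r_{0}\neq 0,\quad \dot{r}(t_{0})=0,$$ then the initial value problem for the nonhomogeneous Burgers equation with variable coefficients $$U_{t}+\frac{\dot{\mu}(t)}{\mu(t)}U+U U_{x}=\frac{1}{2\mu(t)}U_{xx}-\omega^{2}(t)x,\qquad U(x,t)|_{t=t_{0}}=U(x,t_{0}),\quad -\infty<x<\infty,$$ has a solution in the following forms: (a) $$U(x,t)=\frac{\dot{r}(t)}{r(t)}x+\frac{r(t_{0})}{\mu(t)r(t)}V\left(\eta(x,t),\tau(t)\right),$$ where $$\eta(x,t)=\frac{r(t_{0})}{r(t)}x,\qquad \tau(t)=r^{2}(t_{0})\int^{t}\frac{d\xi}{\mu(\xi)r^{2}(\xi)},\quad \tau(t_{0})=0,$$ and the function $V(\eta,\tau)$ satisfies the initial value problem for the standard Burgers equation $$V_{\tau}+V V_{\eta}=\frac{1}{2}V_{\eta\eta},\qquad V(\eta,0)=\mu(t_{0})U(\eta,t_{0}).$$ (b) $$U(x,t)=\frac{\dot{r}(t)}{r(t)}x-\frac{r(t_{0})}{\mu(t)r(t)}\frac{\varphi_{\eta}(\eta(x,t),\tau(t))}{\varphi(\eta(x,t),\tau(t))},$$ where $\eta(x,t)=\frac{r(t_{0})}{r(t)}x$ and $\tau(t)=r^{2}(t_{0})\int^{t}\frac{d\xi}{\mu(\xi)r^{2}(\xi)}$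 with $\tau(t_{0})=0$ (as in part (a)), and $\varphi(\eta,\tau)$ satisfies the initial value problem for the heat equation $$\varphi_{\tau}=\frac{1}{2}\varphi_{\eta\eta},\qquad \varphi(\eta,0)=\exp\left[-\int^{\eta}\mu(t_{0})U(\xi,t_{0})d\xi\right].$$
   Context: Here $\dot{\mu}(t)/\mu(t)$ is the damping term, $1/(2\mu(t))$ is the diffusion coefficient, and $-\omega^{2}(t)x$ is the forcing term (linear in the space variable $x$) of the nonhomogeneous Burgers equation. *)

theory Defs
  imports "HOL-Analysis.Analysis"
begin

definition oint :: "real \<Rightarrow> real \<Rightarrow> (real \<Rightarrow> real) \<Rightarrow> real" where
  "oint a b f = (if a \<le> b then integral {a..b} f else - integral {b..a} f)"

definition pd1 :: "(real \<Rightarrow> real \<Rightarrow> real) \<Rightarrow> real \<Rightarrow> real \<Rightarrow> real" where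
  "pd1 F x t = deriv (\<lambda>y. F y t) x"

definition pd2 :: "(real \<Rightarrow> real \<Rightarrow> real) \<Rightarrow> real \<Rightarrow> real \<Rightarrow> real" where
  "pd2 F x t = deriv (\<lambda>s. F x s) t"

definition nh_burgers_sol ::
  "(real \<Rightarrow> real) \<Rightarrow> (real \<Rightarrow> real) \<Rightarrow> real set \<Rightarrow> (real \<Rightarrow> real \<Rightarrow> real) \<Rightarrow> bool" where
  "nh_burgers_sol mu omega2 J U \<longleftrightarrow>
     (\<forall>t\<in>J. \<forall>x.
        (\<lambda>s. U x s) differentiable (at t) \<and>
        (\<lambda>y. U y t) differentiable (at x) \<and>
        (\<lambda>y. pd1 U y t) differentiable (at x) \<and>
        pd2 U x t + deriv mu t / mu t * U x t + U x t * pd1 U x t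
          = 1 / (2 * mu t) * pd1 (pd1 U) x t - omega2 t * x)"

definition burgers_sol :: "real set \<Rightarrow> (real \<Rightarrow> real \<Rightarrow> real) \<Rightarrow> bool" where
  "burgers_sol T V \<longleftrightarrow>
     (\<forall>\<tau>\<in>T. \<forall>\<eta>.
        (\<lambda>p. V (fst p) (snd p)) differentiable (at (\<eta>, \<tau>)) \<and>
        (\<lambda>y. pd1 V y \<tau>) differentiable (at \<eta>) \<and>
        pd2 V \<eta> \<tau> + V \<eta> \<tau> * pd1 V \<eta> \<tau> = 1 / 2 * pd1 (pd1 V) \<eta> \<tau>)"

definition heat_sol :: "real set \<Rightarrow> (real \<Rightarrow> real \<Rightarrow> real) \<Rightarrow> bool" where
  "heat_sol T \<phi> \<longleftrightarrow>
     (\<forall>\<tau>\<in>T. \<forall>\<eta>.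
        (\<lambda>p. \<phi> (fst p) (snd p)) differentiable (at (\<eta>, \<tau>)) \<and>
        (\<lambda>p. pd1 \<phi> (fst p) (snd p)) differentiable (at (\<eta>, \<tau>)) \<and>
        (\<lambda>y. pd1 (pd1 \<phi>) y \<tau>) differentiable (at \<eta>) \<and>
        (\<lambda>y. pd2 \<phi> y \<tau>) differentiable (at \<eta>) \<and>
        pd2 (pd1 \<phi>) \<eta> \<tau> = pd1 (pd2 \<phi>) \<eta> \<tau> \<and>
        pd2 \<phi> \<eta> \<tau> = 1 / 2 * pd1 (pd1 \<phi>) \<eta> \<tau>)"

end

theory Submission
  imports Defs
begin

text \<open>With \<open>\<eta> = r(t\<^sub>0) x / r(t)\<close> and \<open>\<tau>' = r(t\<^sub>0)\<^sup>2 / (\<mu> r\<^sup>2)\<close>, substituting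
  \<open>U = (r'/r) x + r(t\<^sub>0) / (\<mu> r) \<cdot> V(\<eta>, \<tau>)\<close> into the variable-coefficient equation, the
  terms linear in \<open>x\<close> collect to \<open>(r'' + (\<mu>'/\<mu>) r' + \<omega>\<^sup>2 r) x / r = 0\<close>, while the choice of
  \<open>\<tau>'\<close> makes the remaining terms a multiple of the standard Burgers operator applied to \<open>V\<close>.
  Since \<open>r'(t\<^sub>0) = 0\<close> and \<open>\<tau>(t\<^sub>0) = 0\<close>, the initial data are \<open>U(x, t\<^sub>0) = V(x, 0) / \<mu>(t\<^sub>0)\<close>.
  Part (b) follows from part (a) by the Cole--Hopf transform \<open>V = - \<phi>\<^sub>\<eta> / \<phi>\<close>.\<close>

lemma pd_has_derivative:
  assumes D: "((\<lambda>p. F (fst p) (snd p)) has_derivative D) (at (x, y))"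
  shows pd1_eq_has_derivative: "pd1 F x y = D (1, 0)"
    and pd2_eq_has_derivative: "pd2 F x y = D (0, 1)"
proof -
  have scale: "D (h *\<^sub>R v) = h * D v" for h v
    using linear_scale[OF has_derivative_linear[OF D]] by simp
  have "((\<lambda>u. F u y) has_derivative (\<lambda>h. D (h *\<^sub>R (1, 0)))) (at x)"
    using has_derivative_compose[OF has_derivative_Pair[OF has_derivative_ident has_derivative_const] D]
    by simp
  then have "((\<lambda>u. F u y) has_real_derivative D (1, 0)) (at x)"
    unfolding scale has_field_derivative_def by (rule has_derivative_eq_rhs) (auto simp: fun_eq_iff)
  then show "pd1 F x y = D (1, 0)"
    unfolding pd1_def by (rule DERIV_imp_deriv)
  have "((\<lambda>u. F x u) has_derivative (\<lambda>h. D (h *\<^sub>R (0, 1)))) (at y)"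
    using has_derivative_compose[OF has_derivative_Pair[OF has_derivative_const has_derivative_ident] D]
    by simp
  then have "((\<lambda>u. F x u) has_real_derivative D (0, 1)) (at y)"
    unfolding scale has_field_derivative_def by (rule has_derivative_eq_rhs) (auto simp: fun_eq_iff)
  then show "pd2 F x y = D (0, 1)"
    unfolding pd2_def by (rule DERIV_imp_deriv)
qed

lemma DERIV_compose_jointly_differentiable:
  assumes F: "(\<lambda>p. F (fst p) (snd p)) differentiable (at (\<alpha> s, \<beta> s))"
    and \<alpha>: "(\<alpha> has_real_derivative a) (at s)" and \<beta>: "(\<beta> has_real_derivative b) (at s)"
  shows "((\<lambda>s. F (\<alpha> s) (\<beta> s)) has_real_derivative
           a * pd1 F (\<alpha> s) (\<beta> s) + b * pd2 F (\<alpha> s) (\<beta> s)) (at s)"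
proof -
  obtain D where D: "((\<lambda>p. F (fst p) (snd p)) has_derivative D) (at (\<alpha> s, \<beta> s))"
    using F unfolding differentiable_def by blast
  have "((\<lambda>s. F (\<alpha> s) (\<beta> s)) has_derivative (\<lambda>h. D (a * h, b * h))) (at s)"
    using has_derivative_compose[OF has_derivative_Pair[OF \<alpha>[unfolded has_field_derivative_def]
        \<beta>[unfolded has_field_derivative_def]] D]
    by simp
  moreover have "D (a * h, b * h) = (a * D (1, 0) + b * D (0, 1)) * h" for h
  proof -
    have lin: "linear D"
      using has_derivative_linear[OF D] .
    have "(a * h, b * h) = (a * h) *\<^sub>R (1, 0) + (b * h) *\<^sub>R ((0, 1) :: real \<times> real)"
      by simp
    then have "D (a * h, b * h) = (a * h) *\<^sub>R D (1, 0) + (b * h) *\<^sub>R D (0, 1)"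
      by (simp only: linear_add[OF lin] linear_scale[OF lin])
    then show ?thesis
      by (simp add: algebra_simps)
  qed
  ultimately show ?thesis
    unfolding has_field_derivative_def pd1_eq_has_derivative[OF D] pd2_eq_has_derivative[OF D]
    by simp
qed

lemma DERIV_pd1:
  assumes "(\<lambda>p. F (fst p) (snd p)) differentiable (at (x, y))"
  shows "((\<lambda>u. F u y) has_real_derivative pd1 F x y) (at x)"
  using DERIV_compose_jointly_differentiable[where \<alpha>="\<lambda>u. u" and \<beta>="\<lambda>_. y" and s=x,
      OF assms DERIV_ident DERIV_const]
  by simp

lemma DERIV_pd2:
  assumes "(\<lambda>p. F (fst p) (snd p)) differentiable (at (x, y))"
  shows "((\<lambda>u. F x u) has_real_derivative pd2 F x y) (at y)"
  using DERIV_compose_jointly_differentiable[where \<alpha>="\<lambda>_. x" and \<beta>="\<lambda>u. u" and s=y,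
      OF assms DERIV_const DERIV_ident]
  by simp

lemma oint_eq_integral_diff:
  fixes f :: "real \<Rightarrow> real"
  assumes f: "continuous_on {a..b} f" and "u \<in> {a..b}" "v \<in> {a..b}"
  shows "oint u v f = integral {a..v} f - integral {a..u} f"
proof -
  have int: "f integrable_on {c..d}" if "a \<le> c" "d \<le> b" for c d
    using integrable_continuous_real[OF continuous_on_subset[OF f]] that by auto
  show ?thesis
  proof (cases "u \<le> v")
    case True
    then have "integral {a..u} f + integral {u..v} f = integral {a..v} f"
      using assms by (intro Henstock_Kurzweil_Integration.integral_combine int) auto
    then show ?thesis using True unfolding oint_def by simp
  next
    case False
    then have "integral {a..v} f + integral {v..u} f = integral {a..u} f"
      using assms by (intro Henstock_Kurzweil_Integration.integral_combine int) auto
    then show ?thesis using False unfolding oint_def by simp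
  qed
qed

lemma oint_has_real_derivative:
  fixes f :: "real \<Rightarrow> real"
  assumes S: "open S" "is_interval S" "u \<in> S" "t \<in> S" and f: "continuous_on S f"
  shows "((\<lambda>s. oint u s f) has_real_derivative f t) (at t)"
proof -
  obtain e where e: "e > 0" "ball t e \<subseteq> S"
    using S(1,4) open_contains_ball by blast
  define a where "a = min (t - e/2) u"
  define b where "b = max (t + e/2) u"
  have "t - e/2 \<in> ball t e" "t + e/2 \<in> ball t e"
    using e(1) by (simp_all add: dist_real_def)
  then have "t - e/2 \<in> S" "t + e/2 \<in> S"
    using e(2) by blast+
  then have "a \<in> S" "b \<in> S"
    using S(3) unfolding a_def b_def min_def max_def by simp_all
  then have ab: "{a..b} \<subseteq> S"
    using S(2) unfolding is_interval_1 by (meson atLeastAtMost_iff subsetI)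
  have t: "t \<in> {a<..<b}" and u: "u \<in> {a..b}"
    using e(1) unfolding a_def b_def by (simp_all add: min_less_iff_disj less_max_iff_disj)
  have cf: "continuous_on {a..b} f"
    using continuous_on_subset[OF f ab] .
  have "((\<lambda>s. integral {a..s} f) has_real_derivative f t) (at t within {a..b})"
    using integral_has_real_derivative[OF cf] t by simp
  then have "((\<lambda>s. integral {a..s} f) has_real_derivative f t) (at t)"
    using at_within_interior[of t "{a..b}"] t by simp
  then have "((\<lambda>s. integral {a..s} f - integral {a..u} f) has_real_derivative f t) (at t)"
    using DERIV_diff[OF _ DERIV_const] by fastforce
  then show ?thesis
    by (rule has_field_derivative_transform_within_open[OF _ open_greaterThanLessThan t])
       (simp add: oint_eq_integral_diff[OF cf u])
qed

lemma heat_sol_imp_burgers_sol: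
  assumes heat: "heat_sol T \<phi>" and nz: "\<forall>s\<in>T. \<forall>y. \<phi> y s \<noteq> 0"
  shows "burgers_sol T (\<lambda>y s. - pd1 \<phi> y s / \<phi> y s)"
  unfolding burgers_sol_def
proof (intro ballI allI conjI)
  fix \<tau> \<eta> assume \<tau>: "\<tau> \<in> T"
  define P where "P = pd1 \<phi>"
  define Q where "Q = pd1 P"
  define W where "W = (\<lambda>y s. - P y s / \<phi> y s)"
  have \<phi>_diff: "(\<lambda>p. \<phi> (fst p) (snd p)) differentiable (at (y, \<tau>))"
    and P_diff: "(\<lambda>p. P (fst p) (snd p)) differentiable (at (y, \<tau>))"
    and Q_diff: "(\<lambda>y. Q y \<tau>) differentiable (at y)"
    and mixed: "pd2 P y \<tau> = pd1 (pd2 \<phi>) y \<tau>"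
    and heat_eq: "pd2 \<phi> y \<tau> = Q y \<tau> / 2"
    and \<phi>_nz: "\<phi> y \<tau> \<noteq> 0" for y
    using heat nz \<tau> unfolding heat_sol_def P_def Q_def by simp_all
  have d\<phi>: "((\<lambda>u. \<phi> u \<tau>) has_real_derivative P y \<tau>) (at y)" for y
    unfolding P_def by (rule DERIV_pd1[OF \<phi>_diff])
  have dP: "((\<lambda>u. P u \<tau>) has_real_derivative Q y \<tau>) (at y)" for y
    unfolding Q_def by (rule DERIV_pd1[OF P_diff])
  have dQ: "((\<lambda>u. Q u \<tau>) has_real_derivative pd1 Q y \<tau>) (at y)" for y
    unfolding pd1_def using Q_diff DERIV_deriv_iff_real_differentiable by blast
  have d\<phi>_\<tau>: "((\<lambda>s. \<phi> \<eta> s) has_real_derivative Q \<eta> \<tau> / 2) (at \<tau>)"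
    using DERIV_pd2[OF \<phi>_diff] heat_eq by simp
  have "pd1 (pd2 \<phi>) \<eta> \<tau> = deriv (\<lambda>y. Q y \<tau> / 2) \<eta>"
    unfolding pd1_def heat_eq ..
  also have "\<dots> = pd1 Q \<eta> \<tau> / 2"
    by (rule DERIV_imp_deriv) (auto intro!: derivative_eq_intros dQ)
  finally have P_\<tau>: "pd1 (pd2 \<phi>) \<eta> \<tau> = pd1 Q \<eta> \<tau> / 2" .
  have dP_\<tau>: "((\<lambda>s. P \<eta> s) has_real_derivative pd1 Q \<eta> \<tau> / 2) (at \<tau>)"
    using DERIV_pd2[OF P_diff, of \<eta>] unfolding mixed P_\<tau> .
  have dW: "((\<lambda>u. W u \<tau>) has_real_derivative
      ((P y \<tau>)\<^sup>2 - Q y \<tau> * \<phi> y \<tau>) / (\<phi> y \<tau>)\<^sup>2) (at y)" for y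
    unfolding W_def using \<phi>_nz[of y]
    by (auto intro!: derivative_eq_intros d\<phi> dP simp: field_simps power2_eq_square)
  then have W_\<eta>: "(\<lambda>y. pd1 W y \<tau>) = (\<lambda>y. ((P y \<tau>)\<^sup>2 - Q y \<tau> * \<phi> y \<tau>) / (\<phi> y \<tau>)\<^sup>2)"
    unfolding pd1_def using DERIV_imp_deriv by blast
  have dW_\<eta>: "((\<lambda>y. pd1 W y \<tau>) has_real_derivative
      (3 * P \<eta> \<tau> * Q \<eta> \<tau> * \<phi> \<eta> \<tau> - pd1 Q \<eta> \<tau> * (\<phi> \<eta> \<tau>)\<^sup>2 - 2 * (P \<eta> \<tau>)^3)
        / (\<phi> \<eta> \<tau>)^3) (at \<eta>)"
    unfolding W_\<eta> using \<phi>_nz[of \<eta>]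
    by (auto intro!: derivative_eq_intros d\<phi> dP dQ simp: field_simps power2_eq_square power3_eq_cube)
  have dW_\<tau>: "((\<lambda>s. W \<eta> s) has_real_derivative
      (P \<eta> \<tau> * Q \<eta> \<tau> - pd1 Q \<eta> \<tau> * \<phi> \<eta> \<tau>) / (2 * (\<phi> \<eta> \<tau>)\<^sup>2)) (at \<tau>)"
    unfolding W_def using \<phi>_nz[of \<eta>]
    by (auto intro!: derivative_eq_intros d\<phi>_\<tau> dP_\<tau> simp: field_simps power2_eq_square)
  show "(\<lambda>p. - pd1 \<phi> (fst p) (snd p) / \<phi> (fst p) (snd p)) differentiable (at (\<eta>, \<tau>))"
    using \<phi>_diff P_diff \<phi>_nz unfolding P_def by (auto intro!: derivative_intros)
  show "(\<lambda>y. pd1 (\<lambda>y s. - pd1 \<phi> y s / \<phi> y s) y \<tau>) differentiable (at \<eta>)"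
    using dW_\<eta> unfolding W_def P_def real_differentiable_def by blast
  have W_\<eta>_at: "pd1 W \<eta> \<tau> = ((P \<eta> \<tau>)\<^sup>2 - Q \<eta> \<tau> * \<phi> \<eta> \<tau>) / (\<phi> \<eta> \<tau>)\<^sup>2"
    using fun_cong[OF W_\<eta>, of \<eta>] .
  have W_\<eta>\<eta>_at: "pd1 (pd1 W) \<eta> \<tau> =
      (3 * P \<eta> \<tau> * Q \<eta> \<tau> * \<phi> \<eta> \<tau> - pd1 Q \<eta> \<tau> * (\<phi> \<eta> \<tau>)\<^sup>2 - 2 * (P \<eta> \<tau>)^3)
        / (\<phi> \<eta> \<tau>)^3"
    unfolding pd1_def[of "pd1 W"] by (rule DERIV_imp_deriv[OF dW_\<eta>])
  have W_\<tau>_at: "pd2 W \<eta> \<tau> = (P \<eta> \<tau> * Q \<eta> \<tau> - pd1 Q \<eta> \<tau> * \<phi> \<eta> \<tau>) / (2 * (\<phi> \<eta> \<tau>)\<^sup>2)"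
    unfolding pd2_def by (rule DERIV_imp_deriv[OF dW_\<tau>])
  have "pd2 W \<eta> \<tau> + W \<eta> \<tau> * pd1 W \<eta> \<tau> = 1 / 2 * pd1 (pd1 W) \<eta> \<tau>"
    unfolding W_\<eta>_at W_\<eta>\<eta>_at W_\<tau>_at using \<phi>_nz[of \<eta>]
    by (simp add: W_def field_simps power2_eq_square power3_eq_cube)
  then show "pd2 (\<lambda>y s. - pd1 \<phi> y s / \<phi> y s) \<eta> \<tau>
      + - pd1 \<phi> \<eta> \<tau> / \<phi> \<eta> \<tau> * pd1 (\<lambda>y s. - pd1 \<phi> y s / \<phi> y s) \<eta> \<tau>
      = 1 / 2 * pd1 (pd1 (\<lambda>y s. - pd1 \<phi> y s / \<phi> y s)) \<eta> \<tau>"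
    unfolding W_def P_def .
qed

lemma burgers_sol_rescaled_nh_burgers_sol:
  fixes mu omega2 r r' r'' \<tau> :: "real \<Rightarrow> real" and c :: real
  assumes mu_diff: "\<And>t. t \<in> J \<Longrightarrow> mu differentiable (at t)"
    and mu_nz: "\<And>t. t \<in> J \<Longrightarrow> mu t \<noteq> 0"
    and r_d1: "\<And>t. t \<in> J \<Longrightarrow> (r has_real_derivative r' t) (at t)"
    and r_d2: "\<And>t. t \<in> J \<Longrightarrow> (r' has_real_derivative r'' t) (at t)"
    and ode: "\<And>t. t \<in> J \<Longrightarrow> r'' t + deriv mu t / mu t * r' t + omega2 t * r t = 0"
    and r_nz: "\<And>t. t \<in> J \<Longrightarrow> r t \<noteq> 0"
    and \<tau>_d: "\<And>t. t \<in> J \<Longrightarrow> (\<tau> has_real_derivative c\<^sup>2 / (mu t * (r t)\<^sup>2)) (at t)"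
    and V: "burgers_sol (\<tau> ` J) V"
  shows "nh_burgers_sol mu omega2 J
           (\<lambda>x t. r' t / r t * x + c / (mu t * r t) * V (c / r t * x) (\<tau> t))"
  unfolding nh_burgers_sol_def
proof (intro ballI allI conjI)
  fix t x assume t: "t \<in> J"
  define U where "U = (\<lambda>x t. r' t / r t * x + c / (mu t * r t) * V (c / r t * x) (\<tau> t))"
  have V_diff: "(\<lambda>p. V (fst p) (snd p)) differentiable (at (y, \<tau> t))"
    and V1_diff: "(\<lambda>y. pd1 V y (\<tau> t)) differentiable (at y)"
    and burgers: "pd2 V y (\<tau> t) = 1 / 2 * pd1 (pd1 V) y (\<tau> t) - V y (\<tau> t) * pd1 V y (\<tau> t)" for y
    using V t unfolding burgers_sol_def by (simp_all add: eq_diff_eq)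
  have r_t: "r t \<noteq> 0" and mu_t: "mu t \<noteq> 0"
    using t r_nz mu_nz by auto
  have dmu: "(mu has_real_derivative deriv mu t) (at t)"
    using mu_diff[OF t] DERIV_deriv_iff_real_differentiable by blast
  have dV_\<eta>: "((\<lambda>u. V (c / r t * u) (\<tau> t)) has_real_derivative c / r t * pd1 V (c / r t * u) (\<tau> t)) (at u)"
    for u
    using DERIV_chain2[OF DERIV_pd1[OF V_diff] DERIV_cmult[OF DERIV_ident, of "c / r t"]]
    by (simp only: mult_1_left mult_1_right mult.commute)
  have dV1_\<eta>: "((\<lambda>u. pd1 V (c / r t * u) (\<tau> t)) has_real_derivative
      c / r t * pd1 (pd1 V) (c / r t * u) (\<tau> t)) (at u)" for u
    using DERIV_chain2[OF V1_diff[THEN DERIV_deriv_iff_real_differentiable[THEN iffD2]]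
        DERIV_cmult[OF DERIV_ident, of "c / r t"]]
    unfolding pd1_def[of "pd1 V"] by (simp only: mult_1_left mult_1_right mult.commute)
  have dU_x: "((\<lambda>u. U u t) has_real_derivative
      r' t / r t + c\<^sup>2 / (mu t * (r t)\<^sup>2) * pd1 V (c / r t * u) (\<tau> t)) (at u)" for u
    unfolding U_def
    by (rule DERIV_cong[OF DERIV_add[OF DERIV_cmult[OF DERIV_ident] DERIV_cmult[OF dV_\<eta>]]])
       (use r_t mu_t in \<open>simp add: field_simps power2_eq_square\<close>)
  then have U_x: "(\<lambda>u. pd1 U u t) = (\<lambda>u. r' t / r t + c\<^sup>2 / (mu t * (r t)\<^sup>2) * pd1 V (c / r t * u) (\<tau> t))"
    unfolding pd1_def using DERIV_imp_deriv by blast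
  have dU_xx: "((\<lambda>u. pd1 U u t) has_real_derivative
      c ^ 3 / (mu t * (r t) ^ 3) * pd1 (pd1 V) (c / r t * x) (\<tau> t)) (at x)"
    unfolding U_x
    by (rule DERIV_cong[OF DERIV_add[OF DERIV_const DERIV_cmult[OF dV1_\<eta>]]])
       (use r_t mu_t in \<open>simp add: field_simps power2_eq_square power3_eq_cube\<close>)
  have d\<eta>_t: "((\<lambda>s. c / r s * x) has_real_derivative - c * r' t / (r t)\<^sup>2 * x) (at t)"
    using r_t by (auto intro!: derivative_eq_intros r_d1[OF t] simp: field_simps power2_eq_square)
  have dV_t: "((\<lambda>s. V (c / r s * x) (\<tau> s)) has_real_derivative
      - c * r' t / (r t)\<^sup>2 * x * pd1 V (c / r t * x) (\<tau> t)
      + c\<^sup>2 / (mu t * (r t)\<^sup>2) * pd2 V (c / r t * x) (\<tau> t)) (at t)"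
    using DERIV_compose_jointly_differentiable[OF V_diff d\<eta>_t \<tau>_d[OF t]] by simp
  have dU_t: "((\<lambda>s. U x s) has_real_derivative
      (r'' t * r t - (r' t)\<^sup>2) / (r t)\<^sup>2 * x
      - c * (deriv mu t * r t + mu t * r' t) / (mu t * r t)\<^sup>2 * V (c / r t * x) (\<tau> t)
      + c / (mu t * r t) * (- c * r' t / (r t)\<^sup>2 * x * pd1 V (c / r t * x) (\<tau> t)
          + c\<^sup>2 / (mu t * (r t)\<^sup>2) * pd2 V (c / r t * x) (\<tau> t))) (at t)"
    unfolding U_def
    by (rule DERIV_cong[OF DERIV_add[OF DERIV_mult[OF DERIV_divide[OF r_d2[OF t] r_d1[OF t] r_t] DERIV_const]
          DERIV_mult[OF DERIV_divide[OF DERIV_const DERIV_mult[OF dmu r_d1[OF t]]] dV_t]]])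
       (use r_t mu_t in \<open>simp_all add: field_simps power2_eq_square\<close>)
  show "(\<lambda>s. (\<lambda>x t. r' t / r t * x + c / (mu t * r t) * V (c / r t * x) (\<tau> t)) x s) differentiable (at t)"
    using dU_t unfolding U_def real_differentiable_def by blast
  show "(\<lambda>y. (\<lambda>x t. r' t / r t * x + c / (mu t * r t) * V (c / r t * x) (\<tau> t)) y t) differentiable (at x)"
    using dU_x unfolding U_def real_differentiable_def by blast
  show "(\<lambda>y. pd1 (\<lambda>x t. r' t / r t * x + c / (mu t * r t) * V (c / r t * x) (\<tau> t)) y t) differentiable (at x)"
    using dU_xx unfolding U_def real_differentiable_def by blast
  have \<omega>: "omega2 t = - (r'' t + deriv mu t / mu t * r' t) / r t"
    using ode[OF t] r_t by (simp add: field_simps)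
  have "pd2 U x t + deriv mu t / mu t * U x t + U x t * pd1 U x t
      = 1 / (2 * mu t) * pd1 (pd1 U) x t - omega2 t * x"
    unfolding pd2_def[of U] DERIV_imp_deriv[OF dU_t] pd1_def[of "pd1 U"] DERIV_imp_deriv[OF dU_xx]
      fun_cong[OF U_x, of x] burgers \<omega> using r_t mu_t
    by (simp add: U_def field_simps power2_eq_square power3_eq_cube)
  then show "pd2 (\<lambda>x t. r' t / r t * x + c / (mu t * r t) * V (c / r t * x) (\<tau> t)) x t
      + deriv mu t / mu t * (\<lambda>x t. r' t / r t * x + c / (mu t * r t) * V (c / r t * x) (\<tau> t)) x t
      + (\<lambda>x t. r' t / r t * x + c / (mu t * r t) * V (c / r t * x) (\<tau> t)) x t
        * pd1 (\<lambda>x t. r' t / r t * x + c / (mu t * r t) * V (c / r t * x) (\<tau> t)) x t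
      = 1 / (2 * mu t) * pd1 (pd1 (\<lambda>x t. r' t / r t * x + c / (mu t * r t) * V (c / r t * x) (\<tau> t))) x t
        - omega2 t * x"
    unfolding U_def .
qed

lemma neg_log_derivative_exp_oint:
  assumes g: "continuous_on UNIV g" and \<phi>: "\<And>y. \<phi> y s = exp (- oint a y g)"
  shows "- pd1 \<phi> y s / \<phi> y s = g y"
proof -
  have "((\<lambda>u. \<phi> u s) has_real_derivative exp (- oint a y g) * - g y) (at y)"
    unfolding \<phi>
    by (intro DERIV_chain2[OF DERIV_exp] DERIV_minus
        oint_has_real_derivative[OF open_UNIV is_interval_univ UNIV_I UNIV_I g])
  then show ?thesis
    unfolding pd1_def \<phi> by (simp add: DERIV_imp_deriv)
qed

theorem proposition2p1:
  fixes mu omega2 r r' r'' :: "real \<Rightarrow> real"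
    and J :: "real set" and t0 :: real
    and U0 :: "real \<Rightarrow> real"
  assumes J: "open J" "is_interval J" "t0 \<in> J"
    and mu_deriv: "\<And>t. t \<in> J \<Longrightarrow> mu differentiable (at t)"
    and mu_nz: "\<And>t. t \<in> J \<Longrightarrow> mu t \<noteq> 0"
    and r_d1: "\<And>t. t \<in> J \<Longrightarrow> (r has_real_derivative r' t) (at t)"
    and r_d2: "\<And>t. t \<in> J \<Longrightarrow> (r' has_real_derivative r'' t) (at t)"
    and ode: "\<And>t. t \<in> J \<Longrightarrow> r'' t + deriv mu t / mu t * r' t + omega2 t * r t = 0"
    and r_nz: "\<And>t. t \<in> J \<Longrightarrow> r t \<noteq> 0"
    and init: "r t0 \<noteq> 0" "r' t0 = 0"
  defines "\<tau> \<equiv> (\<lambda>t. (r t0)\<^sup>2 * oint t0 t (\<lambda>\<xi>. 1 / (mu \<xi> * (r \<xi>)\<^sup>2)))"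
    and "\<eta> \<equiv> (\<lambda>x t. r t0 / r t * x)"
  shows
    "(\<forall>V. burgers_sol (\<tau> ` J) V \<and> (\<forall>y. V y 0 = mu t0 * U0 y) \<longrightarrow>
        (let U = (\<lambda>x t. r' t / r t * x + r t0 / (mu t * r t) * V (\<eta> x t) (\<tau> t))
         in nh_burgers_sol mu omega2 J U \<and> (\<forall>x. U x t0 = U0 x)))
   \<and>
    (\<forall>\<phi>. continuous_on UNIV U0 \<and> heat_sol (\<tau> ` J) \<phi> \<and>
          (\<forall>s\<in>\<tau> ` J. \<forall>y. \<phi> y s \<noteq> 0) \<and>
          (\<forall>y. \<phi> y 0 = exp (- oint 0 y (\<lambda>\<xi>. mu t0 * U0 \<xi>))) \<longrightarrow>
        (let U = (\<lambda>x t. r' t / r t * x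
                    - r t0 / (mu t * r t) * (pd1 \<phi> (\<eta> x t) (\<tau> t) / \<phi> (\<eta> x t) (\<tau> t)))
         in nh_burgers_sol mu omega2 J U \<and> (\<forall>x. U x t0 = U0 x)))"
proof -
  have cont: "continuous_on J (\<lambda>\<xi>. 1 / (mu \<xi> * (r \<xi>)\<^sup>2))"
    using mu_deriv mu_nz r_d1 r_nz
    by (intro continuous_at_imp_continuous_on ballI continuous_intros
        differentiable_imp_continuous_within DERIV_isCont) (auto simp: real_differentiable_def)
  have \<tau>_d: "(\<tau> has_real_derivative (r t0)\<^sup>2 / (mu t * (r t)\<^sup>2)) (at t)" if "t \<in> J" for t
    using DERIV_cmult[OF oint_has_real_derivative[OF J that cont], of "(r t0)\<^sup>2"]
    unfolding \<tau>_def by simp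
  have at_t0: "r' t0 / r t0 * x + r t0 / (mu t0 * r t0) * V (\<eta> x t0) (\<tau> t0) = V x 0 / mu t0"
    for x and V :: "real \<Rightarrow> real \<Rightarrow> real"
    using init by (simp add: \<tau>_def \<eta>_def oint_def)
  have part_a: "burgers_sol (\<tau> ` J) V \<and> (\<forall>y. V y 0 = mu t0 * U0 y) \<Longrightarrow>
      (let U = (\<lambda>x t. r' t / r t * x + r t0 / (mu t * r t) * V (\<eta> x t) (\<tau> t))
       in nh_burgers_sol mu omega2 J U \<and> (\<forall>x. U x t0 = U0 x))" for V
    using burgers_sol_rescaled_nh_burgers_sol[OF mu_deriv mu_nz r_d1 r_d2 ode r_nz \<tau>_d, where V=V]
      at_t0 mu_nz[OF J(3)] unfolding Let_def \<eta>_def by simp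
  show ?thesis
  proof (intro conjI allI impI)
    fix V assume "burgers_sol (\<tau> ` J) V \<and> (\<forall>y. V y 0 = mu t0 * U0 y)"
    then show "let U = (\<lambda>x t. r' t / r t * x + r t0 / (mu t * r t) * V (\<eta> x t) (\<tau> t))
        in nh_burgers_sol mu omega2 J U \<and> (\<forall>x. U x t0 = U0 x)"
      by (rule part_a)
  next
    fix \<phi> assume \<phi>: "continuous_on UNIV U0 \<and> heat_sol (\<tau> ` J) \<phi> \<and>
        (\<forall>s\<in>\<tau> ` J. \<forall>y. \<phi> y s \<noteq> 0) \<and> (\<forall>y. \<phi> y 0 = exp (- oint 0 y (\<lambda>\<xi>. mu t0 * U0 \<xi>)))"
    define V where "V = (\<lambda>y s. - pd1 \<phi> y s / \<phi> y s)"
    have g: "continuous_on UNIV (\<lambda>\<xi>. mu t0 * U0 \<xi>)"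
      using \<phi> by (intro continuous_intros) auto
    have "burgers_sol (\<tau> ` J) V"
      unfolding V_def using \<phi> by (intro heat_sol_imp_burgers_sol) auto
    moreover have "\<forall>y. V y 0 = mu t0 * U0 y"
      unfolding V_def using \<phi> neg_log_derivative_exp_oint[OF g] by blast
    ultimately show "let U = (\<lambda>x t. r' t / r t * x
          - r t0 / (mu t * r t) * (pd1 \<phi> (\<eta> x t) (\<tau> t) / \<phi> (\<eta> x t) (\<tau> t)))
        in nh_burgers_sol mu omega2 J U \<and> (\<forall>x. U x t0 = U0 x)"
      using part_a[of V] by (simp add: V_def)
  qed
qed

end
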